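(* Every symmetric pseudo-Boolean function $f:\{0,1\}^n\to\mathbb{R}$, with $f(x)=k_{|x|}$, can be represented uniquely in the form \[ f(x)=\sum_{i=0}^{n}\alpha_i\,\min\Bigl(0,\; i-\tfrac12-\sum_{r=1}^n x_r\Bigr)\quad\text{for all }x\in\{0,1\}^n, \] where $\alpha_i=-8\sum_{j=0}^{i}(-1)^{i-j}k_j-2k_{i-1}+6k_i$ for $i=0,1,\ldots,n$, with the convention $k_{-1}=0$.
   Context: A pseudo-Boolean function is a map $\{0,1\}^n\to\mathbb{R}$; it is symmetric if there are reals $k_0,\ldots,k_n$ with $f(x)=k_l$ whenever the Hamming weight $|x|=\sum_j x_j$ equals $l$. *)

theory Defs
  imports Complex_Main "HOL-Library.FuncSet"
begin

abbreviation cube :: "nat \<Rightarrow> (nat \<Rightarrow> nat) set" where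
  "cube n \<equiv> {1..n} \<rightarrow>\<^sub>E {0,1}"

definition hweight :: "nat \<Rightarrow> (nat \<Rightarrow> nat) \<Rightarrow> nat" where
  "hweight n x = (\<Sum>r=1..n. x r)"

definition kprev :: "(nat \<Rightarrow> real) \<Rightarrow> nat \<Rightarrow> real" where
  "kprev k i = (if i = 0 then 0 else k (i - 1))"

definition alpha :: "(nat \<Rightarrow> real) \<Rightarrow> nat \<Rightarrow> real" where
  "alpha k i = -8 * (\<Sum>j=0..i. (-1) ^ (i - j) * k j) - 2 * kprev k i + 6 * k i"

end

theory Submission
  imports Defs
begin

text \<open>
  Write w = |x|.  The summand with index i vanishes unless i \<le> w, so the
  representation asks for the identity k w = \<Sum>i\<le>w. a i * (i - 1/2 - w) for every
  weight w \<le> n.  This is a lower-triangular linear system in the coefficients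
  a 0, ..., a n whose diagonal entries all equal -1/2, hence it has exactly one
  solution; it remains to check that alpha k is that solution.
\<close>

lemma kernel_sum_truncate:
  fixes c :: "nat \<Rightarrow> real"
  assumes "w \<le> n"
  shows "(\<Sum>i=0..n. c i * min 0 (real i - 1/2 - real w))
       = (\<Sum>i=0..w. c i * (real i - 1/2 - real w))"
proof -
  have "(\<Sum>i=0..n. c i * min 0 (real i - 1/2 - real w))
      = (\<Sum>i=0..w. c i * min 0 (real i - 1/2 - real w))"
  proof (rule sum.mono_neutral_right)
    show "\<forall>i\<in>{0..n} - {0..w}. c i * min 0 (real i - 1/2 - real w) = 0"
      by auto
  qed (use assms in auto)
  also have "\<dots> = (\<Sum>i=0..w. c i * (real i - 1/2 - real w))"
    by (rule sum.cong) auto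
  finally show ?thesis .
qed

definition alt_sum :: "(nat \<Rightarrow> real) \<Rightarrow> nat \<Rightarrow> real" where
  "alt_sum k w = (\<Sum>j=0..w. (-1) ^ (w - j) * k j)"

lemma alt_sum_Suc: "alt_sum k (Suc w) = k (Suc w) - alt_sum k w"
proof -
  have "(\<Sum>j=0..w. (-1::real) ^ (Suc w - j) * k j) = (\<Sum>j=0..w. - ((-1) ^ (w - j) * k j))"
    by (rule sum.cong) (auto simp: Suc_diff_le)
  then show ?thesis
    unfolding alt_sum_def by (simp add: sum_negf)
qed

lemma alpha_Suc: "alpha k (Suc w) = 8 * alt_sum k w - 2 * k w - 2 * k (Suc w)"
  using alt_sum_Suc[of k w]
  unfolding alpha_def alt_sum_def[symmetric] kprev_def by simp

text \<open>The closed form of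
  the partial sums of alpha k is needed to make the induction go through, since passing
  from w to w+1 shifts every linear term by -1.\<close>
lemma alpha_solves_system:
  "(\<Sum>i=0..w. alpha k i) = 2 * k w - 4 * alt_sum k w \<and>
   (\<Sum>i=0..w. alpha k i * (real i - 1/2 - real w)) = k w"
proof (induction w)
  case 0
  then show ?case by (simp add: alpha_def alt_sum_def kprev_def)
next
  case (Suc w)
  have shift: "(\<Sum>i=0..w. alpha k i * (real i - 1/2 - real (Suc w)))
      = (\<Sum>i=0..w. alpha k i * (real i - 1/2 - real w)) - (\<Sum>i=0..w. alpha k i)"
    by (simp add: sum_subtractf[symmetric] algebra_simps)
  show ?case
    using Suc shift alt_sum_Suc[of k w] alpha_Suc[of k w] by (simp add: algebra_simps)
qed

text \<open>The system \<Sum>i\<le>w. a i * (i - 1/2 - w) = y w (w \<le> n) is lower triangular with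
  diagonal entries -1/2, so its solution is determined by forward substitution.\<close>
lemma triangular_system_unique:
  fixes a b :: "nat \<Rightarrow> real"
  assumes eq: "\<And>w. w \<le> n \<Longrightarrow>
      (\<Sum>i=0..w. a i * (real i - 1/2 - real w)) = (\<Sum>i=0..w. b i * (real i - 1/2 - real w))"
    and "i \<le> n"
  shows "a i = b i"
  using \<open>i \<le> n\<close>
proof (induction i rule: less_induct)
  case (less w)
  have lower: "(\<Sum>i<w. a i * (real i - 1/2 - real w)) = (\<Sum>i<w. b i * (real i - 1/2 - real w))"
    using less by (intro sum.cong) auto
  have split: "(\<Sum>i=0..w. c i * (real i - 1/2 - real w))
      = (\<Sum>i<w. c i * (real i - 1/2 - real w)) - c w / 2" for c :: "nat \<Rightarrow> real"
    by (simp add: atLeast0AtMost lessThan_Suc_atMost[symmetric])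
  show ?case
    using eq[OF less.prems] lower split[of a] split[of b] by simp
qed

lemma hweight_le:
  assumes "x \<in> cube n"
  shows "hweight n x \<le> n"
proof -
  have "hweight n x \<le> (\<Sum>r=1..n. 1)"
    unfolding hweight_def using assms by (intro sum_mono) (auto simp: PiE_def Pi_def)
  then show ?thesis by simp
qed

lemma hweight_attained:
  assumes "w \<le> n"
  obtains x where "x \<in> cube n" and "hweight n x = w"
proof
  define x :: "nat \<Rightarrow> nat" where "x = (\<lambda>r. if r \<in> {1..n} then (if r \<le> w then 1 else 0) else undefined)"
  show "x \<in> cube n"
    by (auto simp: x_def split: if_splits)
  have "hweight n x = (\<Sum>r=1..n. (if r \<le> w then 1 else 0::nat))"
    unfolding hweight_def x_def by (intro sum.cong) auto
  also have "\<dots> = (\<Sum>r=1..w. 1)"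
    using assms by (intro sum.mono_neutral_cong_right) auto
  finally show "hweight n x = w" by simp
qed

theorem corollary1:
  fixes n :: nat and k :: "nat \<Rightarrow> real" and f :: "(nat \<Rightarrow> nat) \<Rightarrow> real"
  assumes sym: "\<forall>x \<in> cube n. f x = k (hweight n x)"
  shows "(\<forall>x \<in> cube n. f x =
            (\<Sum>i=0..n. alpha k i * min 0 (real i - 1/2 - real (hweight n x))))
       \<and> (\<forall>a :: nat \<Rightarrow> real.
            (\<forall>x \<in> cube n. f x = (\<Sum>i=0..n. a i * min 0 (real i - 1/2 - real (hweight n x))))
            \<longrightarrow> (\<forall>i \<le> n. a i = alpha k i))"
proof (intro conjI allI impI ballI)
  fix x assume x: "x \<in> cube n"
  show "f x = (\<Sum>i=0..n. alpha k i * min 0 (real i - 1/2 - real (hweight n x)))"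
    using sym x kernel_sum_truncate[OF hweight_le[OF x]] alpha_solves_system by simp
next
  fix a :: "nat \<Rightarrow> real" and i :: nat
  assume rep: "\<forall>x \<in> cube n. f x = (\<Sum>i=0..n. a i * min 0 (real i - 1/2 - real (hweight n x)))"
  have "(\<Sum>i=0..w. a i * (real i - 1/2 - real w))
      = (\<Sum>i=0..w. alpha k i * (real i - 1/2 - real w))" if "w \<le> n" for w
  proof -
    obtain x where "x \<in> cube n" and "hweight n x = w"
      using hweight_attained[OF \<open>w \<le> n\<close>] .
    then show ?thesis
      using rep sym kernel_sum_truncate[OF \<open>w \<le> n\<close>] alpha_solves_system by auto
  qed
  then show "i \<le> n \<Longrightarrow> a i = alpha k i"
    by (rule triangular_system_unique)
qed

end
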